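(* The function $G$ extends to a meromorphic function on $\mathbb C$. Its poles are exactly the points $t=2ki-\frac{i}{2}$ for $k\in\mathbb N=\{1,2,\dots\}$ and $t=-2\pi n^2$ for $n\in\mathbb N$, and all of them are simple.
   Context: $G$ is defined by the series $G(t)=\sum_{n=1}^\infty n^{-\frac12-it}\,\frac{t}{2\pi n^2+t}$, which converges absolutely and defines a meromorphic function on $\{t\in\mathbb C:\Im t<\frac32\}$. *)

theory Defs
  imports "HOL-Complex_Analysis.Complex_Analysis"
begin

text \<open>The series G(t) = sum over n >= 1 of n powr (-1/2 - i t) * t / (2 pi n^2 + t).
  It converges absolutely on Im t < 3/2 away from the points t = -2 pi n^2.\<close>
definition G :: "complex \<Rightarrow> complex" where
  "G t = (\<Sum>m. let n = of_nat (Suc m) :: complex in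
            n powr (- (1/2) - \<i> * t) * (t / (2 * of_real pi * n ^ 2 + t)))"

end

theory Submission
  imports Defs
begin

text \<open>Writing \<open>q = t / (2 pi)\<close>, the identity \<open>t / (2 pi n^2 + t) = (q / n^2) (1 - t / (2 pi n^2 + t))\<close>
  splits off one zeta value at a time:
  \<open>G(t) = (\<Sum>j=1..J. (-1)^(j-1) q^j \<zeta>(1/2 + i t + 2 j)) + (-1)^J q^J R_J(t)\<close>, where
  \<open>R_J(t) = \<Sum>n. n powr (-1/2 - i t - 2 J) t / (2 pi n^2 + t)\<close> converges for \<open>Im t < 2 J + 3/2\<close>
  away from the points \<open>-2 pi n^2\<close>. Letting \<open>J\<close> grow gives the continuation. The zeta term of index
  \<open>j\<close> has a simple pole exactly where \<open>1/2 + i t + 2 j = 1\<close>, i.e. at \<open>t = 2 j i - i/2\<close>, with nonzero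
  coefficient \<open>q^j\<close>; each denominator of \<open>R_J\<close> contributes a simple pole at \<open>-2 pi n^2\<close>.
  The continuation of \<open>\<zeta>\<close> itself comes from summing the binomial expansion of
  \<open>(n + 1) powr (1 - w) - n powr (1 - w)\<close> over \<open>n \<ge> 2\<close>, which expresses \<open>(w - 1) (\<zeta>(w) - 1)\<close>
  through its values at \<open>w + 1, w + 2, \<dots>\<close>.\<close>

lemma holomorphic_on_suminf_locally_dominated:
  assumes S: "open S" and hol: "\<And>n. f n holomorphic_on S"
    and dom: "\<And>x. x \<in> S \<Longrightarrow> \<exists>d h. 0 < d \<and> summable h \<and> (\<forall>n. \<forall>y\<in>ball x d \<inter> S. norm (f n y) \<le> h n)"
  shows "(\<lambda>x. \<Sum>n. f n x) holomorphic_on S"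
proof -
  have dom': "\<exists>d h. 0 < d \<and> summable h \<and> (\<forall>\<^sub>F n in sequentially. \<forall>y\<in>ball x d \<inter> S. norm (f n y) \<le> h n)"
    if "x \<in> S" for x
    using dom[OF that] by (auto intro: always_eventually)
  have deriv: "(f n has_field_derivative deriv (f n) x) (at x)" if "x \<in> S" for n x
    using hol S that holomorphic_derivI by blast
  obtain g g' where g: "\<forall>x \<in> S. ((\<lambda>n. f n x) sums g x) \<and> ((\<lambda>n. deriv (f n) x) sums g' x)
      \<and> (g has_field_derivative g' x) (at x)"
    using series_and_derivative_comparison_local[OF S deriv dom'] by blast
  then have "g holomorphic_on S" using S holomorphic_on_open by blast
  moreover have "(\<Sum>n. f n x) = g x" if "x \<in> S" for x
    using g that sums_unique by metis
  ultimately show ?thesis using holomorphic_cong by metis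
qed

lemma norm_of_nat_powr: "norm (of_nat n powr z :: complex) = real n powr Re z"
  by (simp add: norm_powr_real_powr)

lemma summable_real_powr_shift: "c < -1 \<Longrightarrow> summable (\<lambda>m. real (m + k) powr c)"
  using summable_iff_shift[of "\<lambda>n. real n powr c" k] summable_real_powr_iff[of c] by simp

lemma Re_ge_in_ball: "y \<in> ball x d \<Longrightarrow> Re y > Re x - d"
  using abs_Re_le_cmod[of "x - y"] by (simp add: dist_norm)

section \<open>Analytic continuation of the zeta function\<close>

definition zeta_tail :: "complex \<Rightarrow> complex" where
  "zeta_tail w = (\<Sum>m. of_nat (m + 2) powr (- w))"

lemma summable_zeta_tail:
  assumes "Re w > 1"
  shows "summable (\<lambda>m. of_nat (m + 2) powr (- w) :: complex)"
proof (rule summable_norm_cancel)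
  show "summable (\<lambda>m. norm (of_nat (m + 2) powr (- w) :: complex))"
    unfolding norm_of_nat_powr using summable_real_powr_shift[of "- Re w" 2] assms by simp
qed

lemma zeta_tail_sums: "Re w > 1 \<Longrightarrow> (\<lambda>m. of_nat (m + 2) powr (- w) :: complex) sums zeta_tail w"
  unfolding zeta_tail_def by (rule summable_sums[OF summable_zeta_tail])

lemma holomorphic_zeta_tail: "zeta_tail holomorphic_on {w. Re w > 1}"
  unfolding zeta_tail_def
proof (rule holomorphic_on_suminf_locally_dominated)
  show "(\<lambda>w. of_nat (n + 2) powr (- w) :: complex) holomorphic_on {w. 1 < Re w}" for n
    by (intro holomorphic_intros)
  fix x :: complex assume "x \<in> {w. 1 < Re w}"
  then have x: "Re x > 1" by simp
  define d where "d = (Re x - 1) / 2"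
  have "summable (\<lambda>m. real (m + 2) powr (- (Re x - d)))"
    by (rule summable_real_powr_shift) (use x in \<open>simp add: d_def field_simps\<close>)
  moreover have "norm (of_nat (n + 2) powr (- y) :: complex) \<le> real (n + 2) powr (- (Re x - d))"
    if "y \<in> ball x d" for n y
    using Re_ge_in_ball[OF that] by (simp only: norm_of_nat_powr) (intro powr_mono, auto)
  moreover have "d > 0" using x by (simp add: d_def)
  ultimately show "\<exists>d h. 0 < d \<and> summable h \<and>
      (\<forall>n. \<forall>y\<in>ball x d \<inter> {w. 1 < Re w}. norm (of_nat (n + 2) powr (- y) :: complex) \<le> h n)"
    by blast
qed (rule open_halfspace_Re_gt)

lemma norm_pochhammer_le:
  fixes z :: complex
  assumes "norm z \<le> A"
  shows "norm (pochhammer z j) \<le> pochhammer A j"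
proof (induction j)
  case (Suc j)
  have "norm (pochhammer z (Suc j)) = norm (pochhammer z j) * norm (z + of_nat j)"
    by (simp add: pochhammer_Suc norm_mult)
  also have "\<dots> \<le> pochhammer A j * (A + of_nat j)"
    using Suc norm_triangle_ineq[of z "of_nat j"] assms
    by (intro mult_mono) (auto intro: order_trans[OF norm_ge_zero])
  finally show ?case by (simp add: pochhammer_Suc)
qed simp

definition binomial_majorant :: "real \<Rightarrow> nat \<Rightarrow> real" where
  "binomial_majorant A j = pochhammer A j / fact j"

lemma binomial_majorant_nonneg: "A > 0 \<Longrightarrow> binomial_majorant A j \<ge> 0"
  unfolding binomial_majorant_def by (simp add: pochhammer_nonneg)

lemma norm_gchoose_le_binomial_majorant:
  fixes a :: complex
  assumes "norm a \<le> A"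
  shows "norm (a gchoose j) \<le> binomial_majorant A j"
proof -
  have "norm (a gchoose j) = norm (pochhammer (- a) j) / fact j"
    by (simp add: gbinomial_pochhammer norm_mult norm_divide norm_power)
  also have "\<dots> \<le> pochhammer A j / fact j"
    by (intro divide_right_mono norm_pochhammer_le) (use assms in auto)
  finally show ?thesis by (simp add: binomial_majorant_def)
qed

text \<open>Up to signs, the majorant is the binomial series of \<open>(1 - 1/2) powr (- A)\<close>.\<close>
lemma summable_binomial_majorant: "summable (\<lambda>j. binomial_majorant A j * (1/2) ^ j)"
proof -
  have "(\<lambda>j. ((- A) gchoose j) * (- 1/2) ^ j) sums (1 + (- 1/2)) powr (- A)"
    by (rule gen_binomial_real) simp
  moreover have "((- A) gchoose j) * (- 1/2) ^ j = binomial_majorant A j * (1/2) ^ j" for j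
  proof -
    have "((- A) gchoose j) * (- 1/2) ^ j = ((- 1) ^ j * (- 1) ^ j) * (pochhammer A j / fact j) * (1/2) ^ j"
      by (simp add: gbinomial_pochhammer power_mult_distrib[symmetric] field_simps)
    then show ?thesis by (simp add: binomial_majorant_def power_mult_distrib[symmetric])
  qed
  ultimately show ?thesis by (simp add: sums_summable)
qed

lemma summable_binomial_majorant_shift:
  "summable (\<lambda>i. binomial_majorant A (i + k) * (1/2) ^ i)"
proof -
  have "summable (\<lambda>i. 2 ^ k * (binomial_majorant A (i + k) * (1/2) ^ (i + k)))"
    using summable_iff_shift[of "\<lambda>j. binomial_majorant A j * (1/2) ^ j" k] summable_binomial_majorant
    by (intro summable_mult) simp
  then show ?thesis by (simp add: power_add power_one_over)
qed

lemma holomorphic_on_gchoose [holomorphic_intros]: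
  "f holomorphic_on S \<Longrightarrow> (\<lambda>w. (f w :: complex) gchoose j) holomorphic_on S"
  unfolding gbinomial_pochhammer by (intro holomorphic_intros) auto

definition binomial_remainder :: "nat \<Rightarrow> complex \<Rightarrow> nat \<Rightarrow> complex" where
  "binomial_remainder K w m = of_nat (m + 3) powr (1 - w)
     - (\<Sum>j\<le>K. ((1 - w) gchoose j) * of_nat (m + 2) powr ((1 - w) - of_nat j))"

lemma binomial_remainder_sums:
  "(\<lambda>i. ((1 - w) gchoose (i + Suc K)) * of_nat (m + 2) powr ((1 - w) - of_nat (i + Suc K)))
     sums binomial_remainder K w m"
proof -
  have "(\<lambda>j. ((1 - w) gchoose j) * of_real (real (m + 2)) powr ((1 - w) - of_nat j) * of_real 1 ^ j)
      sums of_real (real (m + 2) + 1) powr (1 - w)"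
    by (rule gen_binomial_complex'') simp
  then have "(\<lambda>j. ((1 - w) gchoose j) * of_nat (m + 2) powr ((1 - w) - of_nat j))
      sums (of_nat (m + 3) powr (1 - w))"
    by (simp add: add_ac)
  from sums_split_initial_segment[OF this, of "Suc K"] show ?thesis
    by (simp add: binomial_remainder_def lessThan_Suc_atMost)
qed

lemma norm_binomial_remainder_le:
  assumes "norm (1 - w) \<le> A" "A > 0" "Re w \<ge> \<sigma>"
  shows "norm (binomial_remainder K w m)
    \<le> real (m + 2) powr (- \<sigma> - real K) * (\<Sum>i. binomial_majorant A (i + Suc K) * (1/2) ^ i)"
proof -
  define n where "n = real (m + 2)"
  have n2: "n \<ge> 2" by (simp add: n_def)
  have term_le: "norm (((1 - w) gchoose (i + Suc K)) * of_nat (m + 2) powr ((1 - w) - of_nat (i + Suc K)))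
      \<le> n powr (- \<sigma> - real K) * (binomial_majorant A (i + Suc K) * (1/2) ^ i)" for i
  proof -
    have "norm (((1 - w) gchoose (i + Suc K)) * of_nat (m + 2) powr ((1 - w) - of_nat (i + Suc K)))
        = norm ((1 - w) gchoose (i + Suc K)) * n powr (- Re w - real K - real i)"
      by (simp only: norm_mult norm_of_nat_powr) (simp add: n_def algebra_simps)
    also have "\<dots> = norm ((1 - w) gchoose (i + Suc K)) * (n powr (- Re w - real K) * (1 / n ^ i))"
      using n2 by (simp add: powr_diff powr_realpow)
    also have "\<dots> \<le> binomial_majorant A (i + Suc K) * (n powr (- \<sigma> - real K) * (1/2) ^ i)"
    proof (intro mult_mono norm_gchoose_le_binomial_majorant assms(1))
      show "n powr (- Re w - real K) \<le> n powr (- \<sigma> - real K)"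
        using assms(3) n2 by (intro powr_mono) auto
      show "1 / n ^ i \<le> (1/2) ^ i"
        using n2 by (simp add: power_one_over divide_simps power_mono)
    qed (use assms n2 in \<open>auto intro: binomial_majorant_nonneg\<close>)
    finally show ?thesis by (simp add: mult_ac)
  qed
  have "norm (binomial_remainder K w m)
      \<le> (\<Sum>i. n powr (- \<sigma> - real K) * (binomial_majorant A (i + Suc K) * (1/2) ^ i))"
    unfolding sums_unique[OF binomial_remainder_sums]
    by (rule norm_suminf_le[OF term_le]) (intro summable_mult summable_binomial_majorant_shift)
  also have "\<dots> = n powr (- \<sigma> - real K) * (\<Sum>i. binomial_majorant A (i + Suc K) * (1/2) ^ i)"
    by (rule suminf_mult) (rule summable_binomial_majorant_shift)
  finally show ?thesis by (simp add: n_def)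
qed

definition binomial_remainder_sum :: "nat \<Rightarrow> complex \<Rightarrow> complex" where
  "binomial_remainder_sum K w = (\<Sum>m. binomial_remainder K w m)"

lemma holomorphic_binomial_remainder_sum:
  "binomial_remainder_sum K holomorphic_on {w. Re w > 1 - real K}"
  unfolding binomial_remainder_sum_def[abs_def]
proof (rule holomorphic_on_suminf_locally_dominated)
  show "(\<lambda>w. binomial_remainder K w m) holomorphic_on {w. Re w > 1 - real K}" for m
    unfolding binomial_remainder_def by (intro holomorphic_intros)
  fix x :: complex assume "x \<in> {w. Re w > 1 - real K}"
  then have x: "Re x > 1 - real K" by simp
  define d where "d = (Re x - (1 - real K)) / 2"
  define A where "A = norm (1 - x) + d"
  define C where "C = (\<Sum>i. binomial_majorant A (i + Suc K) * (1/2) ^ i)"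
  have d: "d > 0" using x by (simp add: d_def)
  have "summable (\<lambda>m. real (m + 2) powr (- (Re x - d) - real K) * C)"
    by (intro summable_mult2 summable_real_powr_shift) (use x in \<open>simp add: d_def field_simps\<close>)
  moreover have "norm (binomial_remainder K y m) \<le> real (m + 2) powr (- (Re x - d) - real K) * C"
    if "y \<in> ball x d" for m y
  proof (unfold C_def, rule norm_binomial_remainder_le)
    show "norm (1 - y) \<le> A"
      using that norm_triangle_ineq[of "1 - x" "x - y"] by (simp add: A_def dist_norm)
  qed (use d Re_ge_in_ball[OF that] in \<open>auto simp: A_def intro: add_nonneg_pos\<close>)
  ultimately show "\<exists>d h. 0 < d \<and> summable h \<and>
      (\<forall>m. \<forall>y\<in>ball x d \<inter> {w. Re w > 1 - real K}. norm (binomial_remainder K y m) \<le> h m)"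
    using d by blast
qed (rule open_halfspace_Re_gt)

lemma sums_powr_telescope:
  assumes "Re w > 1"
  shows "(\<lambda>m. of_nat (m + 3) powr (1 - w) - of_nat (m + 2) powr (1 - w) :: complex) sums (- (2 powr (1 - w)))"
proof -
  define f where "f m = (of_nat (m + 2) powr (1 - w) :: complex)" for m
  have "filterlim (\<lambda>m. real (m + 2)) at_top sequentially"
    by (rule filterlim_at_top_mono[OF filterlim_real_sequentially]) auto
  then have "(\<lambda>m. real (m + 2) powr (1 - Re w)) \<longlonglongrightarrow> 0"
    using tendsto_neg_powr[of "1 - Re w"] assms by simp
  then have "(\<lambda>m. norm (f m)) \<longlonglongrightarrow> 0"
    by (simp only: f_def norm_of_nat_powr) simp
  then have "f \<longlonglongrightarrow> 0"
    by (simp only: tendsto_norm_zero_iff)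
  from telescope_sums[OF this] show ?thesis
    by (simp add: f_def add_ac)
qed

lemma gbinomial_Suc_Suc_mult:
  fixes a :: complex
  shows "of_nat (Suc (Suc i)) * (a gchoose Suc (Suc i)) = (a - of_nat (Suc i)) * (a gchoose Suc i)"
  using gbinomial_mult_1[of a "Suc i"] by (simp add: algebra_simps)

definition zeta_tail_reg :: "complex \<Rightarrow> complex" where
  "zeta_tail_reg w = (w - 1) * zeta_tail w"

lemma holomorphic_zeta_tail_reg: "zeta_tail_reg holomorphic_on {w. Re w > 1}"
  unfolding zeta_tail_reg_def[abs_def] by (intro holomorphic_intros holomorphic_zeta_tail)

text \<open>Summing the order-\<open>K + 1\<close> binomial remainder over \<open>n \<ge> 2\<close>: the constant terms telescope
  to \<open>- 2 powr (1 - w)\<close>, the linear terms give \<open>- zeta_tail_reg w\<close>, and the higher terms are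
  multiples of \<open>zeta_tail_reg\<close> at the shifted points \<open>w + i + 1\<close>.\<close>
lemma zeta_tail_reg_recurrence:
  assumes w: "Re w > 1"
  shows "zeta_tail_reg w = 2 powr (1 - w) + binomial_remainder_sum (Suc K) w
           - (\<Sum>i<K. ((1 - w) gchoose Suc i) / of_nat (Suc (Suc i)) * zeta_tail_reg (w + of_nat (Suc i)))"
proof -
  define a where "a = 1 - w"
  have remainder_split: "binomial_remainder (Suc K) w m
      = (of_nat (m + 3) powr (1 - w) - of_nat (m + 2) powr (1 - w))
        - (\<Sum>j\<le>K. (a gchoose Suc j) * of_nat (m + 2) powr (- (w + of_nat j)))" for m
  proof -
    have "(\<lambda>j. ((1 - w) gchoose Suc j) * of_nat (m + 2) powr ((1 - w) - of_nat (Suc j)))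
        = (\<lambda>j. (a gchoose Suc j) * of_nat (m + 2) powr (- (w + of_nat j)))"
      by (rule ext) (simp add: a_def algebra_simps)
    then show ?thesis
      by (simp add: binomial_remainder_def sum.atMost_Suc_shift a_def del: sum.atMost_Suc)
  qed
  have "(\<lambda>m. \<Sum>j\<le>K. (a gchoose Suc j) * of_nat (m + 2) powr (- (w + of_nat j)))
      sums (\<Sum>j\<le>K. (a gchoose Suc j) * zeta_tail (w + of_nat j))"
    by (intro sums_sum sums_mult zeta_tail_sums) (use w in simp)
  then have "binomial_remainder (Suc K) w
      sums (- (2 powr (1 - w)) - (\<Sum>j\<le>K. (a gchoose Suc j) * zeta_tail (w + of_nat j)))"
    unfolding remainder_split[abs_def] by (intro sums_diff sums_powr_telescope w)
  then have remainder_sum: "binomial_remainder_sum (Suc K) w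
      = - (2 powr (1 - w)) - (\<Sum>j\<le>K. (a gchoose Suc j) * zeta_tail (w + of_nat j))"
    by (simp add: binomial_remainder_sum_def sums_iff)
  have "(a gchoose Suc (Suc i)) * zeta_tail (w + of_nat (Suc i))
      = - ((a gchoose Suc i) / of_nat (Suc (Suc i)) * zeta_tail_reg (w + of_nat (Suc i)))" for i
  proof -
    have "of_nat (Suc (Suc i)) * (a gchoose Suc (Suc i)) = - ((w + of_nat i) * (a gchoose Suc i))"
      using gbinomial_Suc_Suc_mult[of i a] by (simp add: a_def algebra_simps)
    moreover have "(of_nat (Suc (Suc i)) :: complex) \<noteq> 0"
      by (simp only: of_nat_eq_0_iff)
    ultimately have "(a gchoose Suc (Suc i)) = - ((w + of_nat i) * (a gchoose Suc i)) / of_nat (Suc (Suc i))"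
      by (simp add: field_simps del: of_nat_Suc)
    then show ?thesis
      by (simp add: zeta_tail_reg_def)
  qed
  then have "(\<Sum>j\<le>K. (a gchoose Suc j) * zeta_tail (w + of_nat j))
      = a * zeta_tail w - (\<Sum>i<K. (a gchoose Suc i) / of_nat (Suc (Suc i)) * zeta_tail_reg (w + of_nat (Suc i)))"
    unfolding lessThan_Suc_atMost[symmetric] sum.lessThan_Suc_shift by (simp add: sum_negf)
  also have "a * zeta_tail w = - zeta_tail_reg w"
    by (simp add: a_def zeta_tail_reg_def algebra_simps)
  finally show ?thesis
    by (simp add: remainder_sum a_def)
qed

text \<open>\<open>zeta_reg_approx K\<close> continues \<open>zeta_tail_reg\<close> to \<open>Re w > 1 - K\<close>: the recurrence expresses
  \<open>zeta_tail_reg w\<close> through values at \<open>w + 1, w + 2, \<dots>\<close>, which lie one strip further right.\<close>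
fun zeta_reg_approx :: "nat \<Rightarrow> complex \<Rightarrow> complex" where
  "zeta_reg_approx 0 w = zeta_tail_reg w"
| "zeta_reg_approx (Suc K) w = 2 powr (1 - w) + binomial_remainder_sum (Suc K) w
     - (\<Sum>i<K. ((1 - w) gchoose Suc i) / of_nat (Suc (Suc i)) * zeta_reg_approx K (w + of_nat (Suc i)))"

lemma zeta_reg_approx_eq_zeta_tail_reg: "Re w > 1 \<Longrightarrow> zeta_reg_approx K w = zeta_tail_reg w"
proof (induction K arbitrary: w)
  case (Suc K)
  then show ?case by (simp add: zeta_tail_reg_recurrence[OF Suc.prems, of K])
qed simp

lemma holomorphic_zeta_reg_approx: "zeta_reg_approx K holomorphic_on {w. Re w > 1 - real K}"
proof (induction K)
  case 0
  then show ?case using holomorphic_zeta_tail_reg by (simp add: fun_eq_iff)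
next
  case (Suc K)
  define U where "U = {w. Re w > 1 - real (Suc K)}"
  have shifted: "(\<lambda>w. zeta_reg_approx K (w + of_nat (Suc i))) holomorphic_on U" for i
  proof -
    have "(zeta_reg_approx K \<circ> (\<lambda>w. w + of_nat (Suc i))) holomorphic_on U"
      by (rule holomorphic_on_compose holomorphic_intros holomorphic_on_subset[OF Suc.IH])+
         (auto simp: U_def)
    then show ?thesis by (simp add: o_def)
  qed
  have "binomial_remainder_sum (Suc K) holomorphic_on U"
    using holomorphic_binomial_remainder_sum[of "Suc K"] by (simp add: U_def)
  then have "(\<lambda>w. 2 powr (1 - w) + binomial_remainder_sum (Suc K) w
     - (\<Sum>i<K. ((1 - w) gchoose Suc i) / of_nat (Suc (Suc i)) * zeta_reg_approx K (w + of_nat (Suc i))))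
     holomorphic_on U"
    by (intro holomorphic_intros shifted) simp_all
  then show ?case by (simp add: U_def)
qed

lemma zeta_reg_approx_mono:
  assumes "Re w > 1 - real K" "K \<le> K'"
  shows "zeta_reg_approx K' w = zeta_reg_approx K w"
proof (rule analytic_continuation_open[where s = "{w. Re w > 1}" and s' = "{w. Re w > 1 - real K}"
    and f = "zeta_reg_approx K'" and g = "zeta_reg_approx K" and z = w])
  show "{w. Re w > (1::real)} \<noteq> {}" by (auto intro: exI[of _ 2])
  show "connected {w. Re w > 1 - real K}" by (intro convex_connected convex_halfspace_Re_gt)
  show "zeta_reg_approx K' holomorphic_on {w. Re w > 1 - real K}"
    by (rule holomorphic_on_subset[OF holomorphic_zeta_reg_approx]) (use assms(2) in auto)
qed (use assms(1) in \<open>auto simp: zeta_reg_approx_eq_zeta_tail_reg open_halfspace_Re_gt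
       holomorphic_zeta_reg_approx\<close>)

text \<open>The entire function equal to \<open>(w - 1) (\<zeta>(w) - 1)\<close>.\<close>
definition zeta_reg :: "complex \<Rightarrow> complex" where
  "zeta_reg w = zeta_reg_approx (nat \<lceil>1 - Re w\<rceil> + 1) w"

lemma zeta_reg_eq_approx:
  assumes "Re w > 1 - real K"
  shows "zeta_reg w = zeta_reg_approx K w"
proof -
  define K0 where "K0 = nat \<lceil>1 - Re w\<rceil> + 1"
  have K0: "Re w > 1 - real K0" unfolding K0_def by linarith
  have "zeta_reg w = zeta_reg_approx (max K K0) w"
    unfolding zeta_reg_def K0_def[symmetric] by (rule zeta_reg_approx_mono[symmetric]) (use K0 in auto)
  also have "\<dots> = zeta_reg_approx K w" by (rule zeta_reg_approx_mono) (use assms in auto)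
  finally show ?thesis .
qed

lemma holomorphic_zeta_reg: "zeta_reg holomorphic_on UNIV"
proof -
  have "zeta_reg field_differentiable at z" for z
  proof -
    define K where "K = nat \<lceil>1 - Re z\<rceil> + 1"
    define U where "U = {w. Re w > 1 - real K}"
    have U: "open U" "z \<in> U" unfolding U_def K_def by (auto intro: open_halfspace_Re_gt) linarith
    have "zeta_reg holomorphic_on U"
      using holomorphic_zeta_reg_approx[of K] zeta_reg_eq_approx
      by (subst holomorphic_cong[OF refl]) (auto simp: U_def)
    then show ?thesis using U holomorphic_on_imp_differentiable_at by blast
  qed
  then show ?thesis by (simp add: holomorphic_on_def field_differentiable_at_within)
qed

lemma analytic_on_zeta_reg_compose [analytic_intros]:
  "f analytic_on S \<Longrightarrow> (\<lambda>t. zeta_reg (f t)) analytic_on S"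
proof -
  assume f: "f analytic_on S"
  have "zeta_reg analytic_on UNIV" using holomorphic_zeta_reg by (simp add: analytic_on_open)
  then have "(zeta_reg \<circ> f) analytic_on S"
    by (intro analytic_on_compose[OF f]) (auto elim: analytic_on_subset)
  then show ?thesis by (simp add: o_def)
qed

lemma zeta_reg_1: "zeta_reg 1 = 1"
proof -
  have "binomial_remainder 1 1 m = 0" for m
  proof -
    have "(of_nat m + 3 :: complex) \<noteq> 0" "(2 + of_nat m :: complex) \<noteq> 0"
      by (metis add.commute of_nat_add of_nat_eq_0_iff of_nat_numeral zero_neq_numeral add_is_0)+
    then show ?thesis by (simp add: binomial_remainder_def)
  qed
  then have "zeta_reg_approx 1 1 = 1" by (simp add: binomial_remainder_sum_def)
  then show ?thesis by (simp add: zeta_reg_eq_approx[where K = 1])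
qed

text \<open>The Riemann zeta function; the value at the pole \<open>w = 1\<close> is the junk value \<open>1\<close>.\<close>
definition zeta :: "complex \<Rightarrow> complex" where
  "zeta w = 1 + zeta_reg w / (w - 1)"

lemma zeta_sums:
  assumes "Re w > 1"
  shows "(\<lambda>m. of_nat (Suc m) powr (- w)) sums zeta w"
proof -
  have "(\<lambda>m. of_nat (Suc (Suc m)) powr (- w)) sums zeta_tail w"
    using zeta_tail_sums[OF assms] by (simp add: add_ac)
  then have "(\<lambda>m. of_nat (Suc m) powr (- w)) sums (zeta_tail w + 1)"
    using sums_Suc_iff[where f = "\<lambda>m. of_nat (Suc m) powr (- w) :: complex"] by simp
  moreover have "w \<noteq> 1" using assms by auto
  then have "zeta w = zeta_tail w + 1"
    using zeta_reg_eq_approx[where K = 0] assms by (simp add: zeta_def zeta_tail_reg_def)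
  ultimately show ?thesis by simp
qed

section \<open>Simple poles\<close>

definition pole_decomp ::
    "(complex \<Rightarrow> complex) \<Rightarrow> complex \<Rightarrow> (complex \<Rightarrow> complex) \<Rightarrow> (complex \<Rightarrow> complex) \<Rightarrow> bool" where
  "pole_decomp f z A B \<longleftrightarrow> A analytic_on {z} \<and> B analytic_on {z} \<and>
      (\<forall>\<^sub>F t in at z. f t = A t + B t / (t - z))"

lemma pole_decomp_analytic: "f analytic_on {z} \<Longrightarrow> pole_decomp f z f (\<lambda>_. 0)"
  unfolding pole_decomp_def by auto

lemma pole_decomp_cong: "pole_decomp f z A B \<Longrightarrow> (\<forall>\<^sub>F t in at z. g t = f t) \<Longrightarrow> pole_decomp g z A B"
  unfolding pole_decomp_def by (auto elim: eventually_elim2)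

lemma pole_decomp_add:
  "pole_decomp f z A B \<Longrightarrow> pole_decomp g z A' B' \<Longrightarrow>
    pole_decomp (\<lambda>t. f t + g t) z (\<lambda>t. A t + A' t) (\<lambda>t. B t + B' t)"
  unfolding pole_decomp_def
  by (auto intro!: analytic_intros elim: eventually_elim2 simp: add_divide_distrib)

lemma pole_decomp_mult:
  "h analytic_on {z} \<Longrightarrow> pole_decomp f z A B \<Longrightarrow>
    pole_decomp (\<lambda>t. h t * f t) z (\<lambda>t. h t * A t) (\<lambda>t. h t * B t)"
  unfolding pole_decomp_def
  by (auto intro!: analytic_intros elim: eventually_mono simp: distrib_left)

lemma pole_decomp_sum:
  "finite I \<Longrightarrow> (\<And>i. i \<in> I \<Longrightarrow> pole_decomp (f i) z (A i) (B i)) \<Longrightarrow>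
    pole_decomp (\<lambda>t. \<Sum>i\<in>I. f i t) z (\<lambda>t. \<Sum>i\<in>I. A i t) (\<lambda>t. \<Sum>i\<in>I. B i t)"
proof (induction I rule: finite_induct)
  case empty
  then show ?case by (simp add: pole_decomp_def)
next
  case (insert x F)
  then show ?case using pole_decomp_add[of "f x" z "A x" "B x"] by simp
qed

lemma pole_decomp_meromorphic:
  assumes "pole_decomp f z A B"
  shows "f meromorphic_on {z}"
proof -
  have "(\<lambda>t. (A t * (t - z) + B t) / (t - z)) meromorphic_on {z}"
    using assms unfolding pole_decomp_def
    by (intro meromorphic_intros analytic_on_imp_meromorphic_on analytic_intros) auto
  moreover have "\<forall>\<^sub>F t in at z. f t = (A t * (t - z) + B t) / (t - z)"
  proof -
    have "\<forall>\<^sub>F t in at z. t \<noteq> z" by (rule eventually_neq_at_within)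
    moreover have "\<forall>\<^sub>F t in at z. f t = A t + B t / (t - z)"
      using assms by (simp add: pole_decomp_def)
    ultimately show ?thesis by eventually_elim (simp add: field_simps)
  qed
  ultimately show ?thesis
    by (subst meromorphic_on_cong[where g = "\<lambda>t. (A t * (t - z) + B t) / (t - z)"]) auto
qed

lemma pole_decomp_is_pole:
  assumes "pole_decomp f z A B" "B z \<noteq> 0"
  shows "is_pole f z" "zorder f z = -1"
proof -
  define g where "g t = A t * (t - z) + B t" for t
  from assms(1) obtain r1 r2 where
    "r1 > 0" "A holomorphic_on ball z r1" "r2 > 0" "B holomorphic_on ball z r2"
    unfolding pole_decomp_def analytic_at_ball by blast
  moreover from assms(1) obtain d where "d > 0"
    and eq: "\<And>t. t \<noteq> z \<Longrightarrow> dist t z < d \<Longrightarrow> f t = A t + B t / (t - z)"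
    unfolding pole_decomp_def eventually_at by blast
  ultimately obtain r where r: "r > 0" "A holomorphic_on ball z r" "B holomorphic_on ball z r" "r \<le> d"
    by (intro that[of "min d (min r1 r2)"]) (auto elim: holomorphic_on_subset)
  have g: "g holomorphic_on ball z r" unfolding g_def using r by (intro holomorphic_intros) auto
  have gz: "g z \<noteq> 0" using assms(2) by (simp add: g_def)
  have f_eq: "f t = g t / (t - z)" if "t \<in> ball z r" "t \<noteq> z" for t
    using eq[of t] that r(4) by (auto simp: g_def dist_commute field_simps)
  have "is_pole (\<lambda>t. g t / (t - z) ^ 1) z"
    by (rule is_pole_basic[OF g]) (use r gz in auto)
  moreover have "\<forall>\<^sub>F t in at z. g t / (t - z) ^ 1 = f t"
    unfolding eventually_at using r f_eq by (auto simp: dist_commute intro!: exI[of _ r])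
  ultimately show "is_pole f z" by (rule is_pole_transform) simp
  show "zorder f z = -1"
    by (rule zorder_eqI[OF _ _ g gz]) (use r f_eq in \<open>auto simp: power_int_minus divide_inverse\<close>)
qed

lemma pole_decomp_not_pole:
  assumes "pole_decomp f z A B" "B z = 0"
  shows "\<not> is_pole f z"
proof
  assume pole: "is_pole f z"
  from assms(1) have A: "A analytic_on {z}" and B: "B analytic_on {z}"
    and ev: "\<forall>\<^sub>F t in at z. f t = A t + B t / (t - z)"
    by (auto simp: pole_decomp_def)
  have "(B has_field_derivative deriv B z) (at z)"
    using B analytic_on_imp_differentiable_at field_differentiable_derivI by blast
  then have "((\<lambda>t. (B t - B z) / (t - z)) \<longlongrightarrow> deriv B z) (at z)"
    by (simp add: has_field_derivative_iff)
  moreover have "(A \<longlongrightarrow> A z) (at z)"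
    using A analytic_at_imp_isCont isCont_def by blast
  ultimately have "((\<lambda>t. A t + (B t - B z) / (t - z)) \<longlongrightarrow> A z + deriv B z) (at z)"
    by (intro tendsto_add)
  then have "(f \<longlongrightarrow> A z + deriv B z) (at z)"
    by (rule Lim_transform_eventually) (use ev assms(2) in \<open>auto elim: eventually_mono\<close>)
  then show False
    using pole unfolding is_pole_def by (intro not_tendsto_and_filterlim_at_infinity) auto
qed

section \<open>The remainder series\<close>

definition denominator_zero :: "complex \<Rightarrow> bool" where
  "denominator_zero t \<longleftrightarrow> (\<exists>n::nat. n \<ge> 1 \<and> t = - 2 * of_real pi * of_nat n ^ 2)"

lemma denominator_zero_real_nonzero: "denominator_zero t \<Longrightarrow> Im t = 0 \<and> t \<noteq> 0"
  by (auto simp: denominator_zero_def)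

lemma neg_square_point_eq_iff:
  "(- 2 * of_real pi * of_nat a ^ 2 :: complex) = - 2 * of_real pi * of_nat b ^ 2 \<longleftrightarrow> a = b"
proof
  assume "(- 2 * of_real pi * of_nat a ^ 2 :: complex) = - 2 * of_real pi * of_nat b ^ 2"
  then have "(of_nat (a ^ 2) :: complex) = of_nat (b ^ 2)" by simp
  then have "a ^ 2 = b ^ 2" by (simp only: of_nat_eq_iff)
  then show "a = b" by (rule power_eq_imp_eq_base) auto
qed simp

lemma norm_neg_square_point_ge: "norm (- 2 * of_real pi * of_nat n ^ 2 :: complex) \<ge> real n"
proof -
  have "real n \<le> real n ^ 2" by (cases n) (auto simp: power2_eq_square)
  also have "\<dots> \<le> 2 * pi * real n ^ 2" using pi_gt3 by (simp add: mult_le_cancel_right1)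
  finally show ?thesis by (simp add: norm_mult norm_power)
qed

lemma eventually_not_denominator_zero: "\<forall>\<^sub>F t in at t0. \<not> denominator_zero t"
proof -
  define N where "N = nat \<lceil>norm t0\<rceil> + 1"
  have "\<forall>\<^sub>F t in at t0. \<forall>n\<in>{..<N}. t \<noteq> - 2 * of_real pi * of_nat n ^ 2"
    by (intro eventually_ball_finite ballI eventually_neq_at_within) auto
  moreover have "\<forall>\<^sub>F t in at t0. t \<in> ball t0 1"
    by (rule eventually_at_in_open') auto
  ultimately show ?thesis
  proof eventually_elim
    case (elim t)
    have "n < N" if "t = - 2 * of_real pi * of_nat n ^ 2" for n
    proof -
      have "norm t \<le> norm t0 + norm (t - t0)" using norm_triangle_ineq[of t0 "t - t0"] by simp
      moreover have "norm (t - t0) < 1" using elim by (simp add: dist_norm norm_minus_commute)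
      moreover have "norm t0 \<le> real (nat \<lceil>norm t0\<rceil>)" by (rule real_nat_ceiling_ge)
      ultimately have "real n < real N"
        using norm_neg_square_point_ge[of n] that unfolding N_def by (simp only: of_nat_add of_nat_1)
      then show ?thesis by simp
    qed
    then show ?case using elim by (auto simp: denominator_zero_def)
  qed
qed

definition G_remainder_term :: "nat \<Rightarrow> complex \<Rightarrow> nat \<Rightarrow> complex" where
  "G_remainder_term J t m = of_nat (Suc m) powr (- (1/2) - \<i> * t - 2 * of_nat J)
       * (t / (2 * of_real pi * (of_nat (Suc m)) ^ 2 + t))"

definition G_remainder :: "nat \<Rightarrow> complex \<Rightarrow> complex" where
  "G_remainder J t = (\<Sum>m. G_remainder_term J t m)"

lemma G_remainder_0: "G_remainder 0 = G"
  by (simp add: fun_eq_iff G_remainder_def G_def G_remainder_term_def Let_def)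

lemma norm_denominator_ge:
  fixes t :: complex
  assumes "norm t \<le> pi * real (Suc m) ^ 2"
  shows "norm (2 * of_real pi * (of_nat (Suc m)) ^ 2 + t) \<ge> pi * real (Suc m) ^ 2"
proof -
  have "norm (2 * of_real pi * (of_nat (Suc m)) ^ 2 :: complex) = 2 * pi * real (Suc m) ^ 2"
    by (simp only: norm_mult norm_power norm_of_nat norm_of_real) simp
  then show ?thesis
    using norm_diff_ineq[of "2 * of_real pi * (of_nat (Suc m)) ^ 2 :: complex" t] assms by simp
qed

lemma denominator_nonzero:
  fixes t :: complex
  assumes "norm t \<le> pi * real (Suc m) ^ 2"
  shows "2 * of_real pi * (of_nat (Suc m)) ^ 2 + t \<noteq> 0"
proof -
  have "pi * real (Suc m) ^ 2 > 0" by (simp del: of_nat_Suc)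
  then have "norm (2 * of_real pi * (of_nat (Suc m)) ^ 2 + t) > 0"
    using norm_denominator_ge[OF assms] by linarith
  then show ?thesis using zero_less_norm_iff by blast
qed

lemma norm_G_remainder_term_le:
  fixes t :: complex
  assumes "norm t \<le> pi * real (Suc m) ^ 2"
  shows "norm (G_remainder_term J t m) \<le> norm t / pi * real (Suc m) powr (Im t - 2 * real J - 5/2)"
proof -
  define n where "n = real (Suc m)"
  have n1: "n \<ge> 1" by (simp add: n_def)
  have D: "norm (2 * of_real pi * (of_nat (Suc m)) ^ 2 + t) \<ge> pi * n ^ 2"
    using norm_denominator_ge[OF assms] by (simp add: n_def)
  have "norm (G_remainder_term J t m)
      = n powr (Im t - 2 * real J - 1/2) * (norm t / norm (2 * of_real pi * (of_nat (Suc m)) ^ 2 + t))"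
    unfolding G_remainder_term_def
    by (simp only: norm_mult norm_of_nat_powr norm_divide) (simp add: n_def algebra_simps)
  also have "\<dots> \<le> n powr (Im t - 2 * real J - 1/2) * (norm t / (pi * n ^ 2))"
  proof -
    have "pi * n ^ 2 > 0" using n1 by simp
    then show ?thesis using D by (intro mult_left_mono divide_left_mono mult_pos_pos) auto
  qed
  also have "\<dots> = norm t / pi * (n powr (Im t - 2 * real J - 1/2) / n powr 2)"
    using n1 by (simp add: powr_realpow')
  also have "n powr (Im t - 2 * real J - 1/2) / n powr 2 = n powr (Im t - 2 * real J - 5/2)"
    by (simp add: powr_diff[symmetric])
  finally show ?thesis by (simp add: n_def)
qed

lemma le_pi_Suc_square: "x \<le> real N \<Longrightarrow> x \<le> pi * real (Suc (m + N)) ^ 2"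
proof -
  assume "x \<le> real N"
  also have "N \<le> Suc (m + N) ^ 2" using self_le_power[of "Suc (m + N)" 2] by simp
  then have "real N \<le> real (Suc (m + N)) ^ 2" by (metis of_nat_le_iff of_nat_power)
  also have "\<dots> \<le> pi * real (Suc (m + N)) ^ 2" using pi_gt3 by (simp add: mult_le_cancel_right1)
  finally show ?thesis .
qed

lemma summable_G_remainder_term:
  assumes "Im t < 2 * real J + 3/2"
  shows "summable (G_remainder_term J t)"
proof (rule summable_comparison_test')
  show "summable (\<lambda>m. norm t / pi * real (m + 1) powr (Im t - 2 * real J - 5/2))"
    by (intro summable_mult summable_real_powr_shift) (use assms in simp)
  fix m assume "nat \<lceil>norm t\<rceil> \<le> m"
  then have "norm t \<le> pi * real (Suc (0 + m)) ^ 2"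
    by (intro le_pi_Suc_square) linarith
  then show "norm (G_remainder_term J t m) \<le> norm t / pi * real (m + 1) powr (Im t - 2 * real J - 5/2)"
    using norm_G_remainder_term_le by simp
qed

lemma G_remainder_tail_holomorphic:
  assumes t0: "Im t0 < 2 * real J + 3/2" and N: "norm t0 + 1 \<le> real N"
  obtains r where "r > 0" "(\<lambda>t. \<Sum>m. G_remainder_term J t (m + N)) holomorphic_on ball t0 r"
    "\<And>t. t \<in> ball t0 r \<Longrightarrow> summable (\<lambda>m. G_remainder_term J t (m + N))"
proof -
  define r where "r = min 1 ((2 * real J + 3/2 - Im t0) / 2)"
  define M where "M = norm t0 + 1"
  define c where "c = Im t0 + r"
  have r: "r > 0" using t0 by (simp add: r_def)
  have c: "c < 2 * real J + 3/2" using t0 by (auto simp: c_def r_def min_def field_simps)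
  have near: "norm t \<le> M" "Im t \<le> c" if "t \<in> ball t0 r" for t
  proof -
    have "norm (t - t0) < r" "r \<le> 1" using that by (auto simp: r_def dist_norm norm_minus_commute)
    then show "norm t \<le> M" "Im t \<le> c"
      using norm_triangle_ineq[of t0 "t - t0"] abs_Im_le_cmod[of "t - t0"] by (auto simp: M_def c_def)
  qed
  have big: "M \<le> pi * real (Suc (m + N)) ^ 2" for m
    using N by (intro le_pi_Suc_square) (simp add: M_def)
  define h where "h m = M / pi * real (m + Suc N) powr (c - 2 * real J - 5/2)" for m
  have h: "h m = M / pi * real (Suc (m + N)) powr (c - 2 * real J - 5/2)" for m
    by (simp add: h_def)
  have "summable h" unfolding h_def
    by (intro summable_mult summable_real_powr_shift) (use c in simp)
  moreover have bound: "norm (G_remainder_term J t (m + N)) \<le> h m" if "t \<in> ball t0 r" for t m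
  proof -
    have "norm (G_remainder_term J t (m + N))
        \<le> norm t / pi * real (Suc (m + N)) powr (Im t - 2 * real J - 5/2)"
      by (rule norm_G_remainder_term_le) (use big[of m] near[OF that] in linarith)
    also have "\<dots> \<le> h m"
      unfolding h using near[OF that] by (intro mult_mono divide_right_mono powr_mono) (auto simp: M_def)
    finally show ?thesis .
  qed
  moreover have "2 * of_real pi * (of_nat (Suc (m + N))) ^ 2 + t \<noteq> 0" if "t \<in> ball t0 r" for t m
    using big[of m] near[OF that] by (intro denominator_nonzero) linarith
  then have "(\<lambda>t. G_remainder_term J t (m + N)) holomorphic_on ball t0 r" for m
    unfolding G_remainder_term_def by (intro holomorphic_intros) auto
  ultimately have "(\<lambda>t. \<Sum>m. G_remainder_term J t (m + N)) holomorphic_on ball t0 r"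
    by (intro holomorphic_on_suminf_locally_dominated exI[of _ 1] exI[of _ h]) auto
  moreover have "summable (\<lambda>m. G_remainder_term J t (m + N))" if "t \<in> ball t0 r" for t
    by (rule summable_comparison_test'[OF \<open>summable h\<close>]) (use bound that in auto)
  ultimately show ?thesis using r that by blast
qed

lemma pole_decomp_G_remainder_term:
  "pole_decomp (\<lambda>t. G_remainder_term J t m) t0
     (\<lambda>t. if t0 = - 2 * of_real pi * of_nat (Suc m) ^ 2 then 0 else G_remainder_term J t m)
     (\<lambda>t. if t0 = - 2 * of_real pi * of_nat (Suc m) ^ 2
          then of_nat (Suc m) powr (- (1/2) - \<i> * t - 2 * of_nat J) * t else 0)"
proof (cases "t0 = - 2 * of_real pi * of_nat (Suc m) ^ 2")
  case True
  then have "G_remainder_term J t m = of_nat (Suc m) powr (- (1/2) - \<i> * t - 2 * of_nat J) * t / (t - t0)"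
    for t by (simp add: G_remainder_term_def)
  moreover have "(\<lambda>t. of_nat (Suc m) powr (- (1/2) - \<i> * t - 2 * of_nat J) * t) analytic_on {t0}"
    by (intro analytic_intros) (simp del: of_nat_Suc)
  ultimately show ?thesis
    using True by (simp add: pole_decomp_def del: of_nat_Suc)
next
  case False
  then have "2 * of_real pi * of_nat (Suc m) ^ 2 + t0 \<noteq> 0"
    by (metis add.commute add_eq_0_iff mult_minus_left)
  then have "(\<lambda>t. G_remainder_term J t m) analytic_on {t0}"
    unfolding G_remainder_term_def by (intro analytic_intros) (auto simp del: of_nat_Suc)
  with False show ?thesis by (simp add: pole_decomp_analytic)
qed

lemma sum_G_remainder_residues_nonzero_iff:
  assumes N: "norm t0 < real N"
  shows "(\<Sum>m<N. if t0 = - 2 * of_real pi * of_nat (Suc m) ^ 2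
            then of_nat (Suc m) powr (- (1/2) - \<i> * t0 - 2 * of_nat J) * t0 else 0) \<noteq> 0
    \<longleftrightarrow> denominator_zero t0" (is "?sum \<noteq> 0 \<longleftrightarrow> _")
proof
  assume nonzero: "?sum \<noteq> 0"
  have "\<exists>m. t0 = - 2 * of_real pi * of_nat (Suc m) ^ 2"
  proof (rule ccontr)
    assume "\<nexists>m. t0 = - 2 * of_real pi * of_nat (Suc m) ^ 2"
    then have "?sum = 0" by (intro sum.neutral) auto
    with nonzero show False by contradiction
  qed
  then obtain m where "t0 = - 2 * of_real pi * of_nat (Suc m) ^ 2" by blast
  then show "denominator_zero t0"
    unfolding denominator_zero_def by (intro exI[of _ "Suc m"]) simp
next
  assume "denominator_zero t0"
  then obtain n where n: "n \<ge> 1" "t0 = - 2 * of_real pi * of_nat n ^ 2"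
    by (auto simp: denominator_zero_def)
  have pole_iff: "t0 = - 2 * of_real pi * of_nat (Suc m) ^ 2 \<longleftrightarrow> m = n - 1" for m
    unfolding n(2) neg_square_point_eq_iff using n(1) by linarith
  have "real n < real N" using norm_neg_square_point_ge[of n] n(2) N by simp
  then have "n - 1 < N" by linarith
  then have "?sum = of_nat n powr (- (1/2) - \<i> * t0 - 2 * of_nat J) * t0"
    unfolding pole_iff using n(1) by (simp add: Suc_diff_1 del: of_nat_Suc)
  moreover have "t0 \<noteq> 0" using denominator_zero_real_nonzero[OF \<open>denominator_zero t0\<close>] by simp
  ultimately show "?sum \<noteq> 0" using n(1) by simp
qed

lemma pole_decomp_G_remainder:
  assumes t0: "Im t0 < 2 * real J + 3/2"
  obtains A B where "pole_decomp (G_remainder J) t0 A B" "B t0 \<noteq> 0 \<longleftrightarrow> denominator_zero t0"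
proof -
  define N where "N = nat \<lceil>norm t0\<rceil> + 1"
  have "norm t0 \<le> real (nat \<lceil>norm t0\<rceil>)" by (rule real_nat_ceiling_ge)
  then have N: "norm t0 + 1 \<le> real N" unfolding N_def of_nat_add of_nat_1 by linarith
  then obtain r where "r > 0" and tail_hol: "(\<lambda>t. \<Sum>m. G_remainder_term J t (m + N)) holomorphic_on ball t0 r"
    and tail_summable: "\<And>t. t \<in> ball t0 r \<Longrightarrow> summable (\<lambda>m. G_remainder_term J t (m + N))"
    using G_remainder_tail_holomorphic[OF t0] by blast
  define pole where "pole m \<longleftrightarrow> t0 = - 2 * of_real pi * of_nat (Suc m) ^ 2" for m
  define A where "A m t = (if pole m then 0 else G_remainder_term J t m)" for m t
  define B where "B m t = (if pole m then of_nat (Suc m) powr (- (1/2) - \<i> * t - 2 * of_nat J) * t else 0)"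
    for m t
  have "pole_decomp (\<lambda>t. \<Sum>m<N. G_remainder_term J t m) t0 (\<lambda>t. \<Sum>m<N. A m t) (\<lambda>t. \<Sum>m<N. B m t)"
    unfolding A_def B_def pole_def by (intro pole_decomp_sum pole_decomp_G_remainder_term) simp
  moreover have "pole_decomp (\<lambda>t. \<Sum>m. G_remainder_term J t (m + N)) t0
      (\<lambda>t. \<Sum>m. G_remainder_term J t (m + N)) (\<lambda>_. 0)"
    using tail_hol \<open>r > 0\<close> by (intro pole_decomp_analytic) (auto simp: analytic_at intro!: exI[of _ "ball t0 r"])
  ultimately have decomp: "pole_decomp (\<lambda>t. (\<Sum>m<N. G_remainder_term J t m) + (\<Sum>m. G_remainder_term J t (m + N)))
      t0 (\<lambda>t. (\<Sum>m<N. A m t) + (\<Sum>m. G_remainder_term J t (m + N))) (\<lambda>t. (\<Sum>m<N. B m t) + 0)"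
    by (rule pole_decomp_add)
  have "\<forall>\<^sub>F t in at t0. t \<in> ball t0 r" using \<open>r > 0\<close> by (intro eventually_at_in_open') auto
  then have "\<forall>\<^sub>F t in at t0. G_remainder J t = (\<Sum>m<N. G_remainder_term J t m) + (\<Sum>m. G_remainder_term J t (m + N))"
  proof eventually_elim
    case (elim t)
    then have "summable (G_remainder_term J t)" using tail_summable summable_iff_shift by blast
    then show ?case unfolding G_remainder_def by (subst suminf_split_initial_segment[where k = N]) auto
  qed
  with decomp have "pole_decomp (G_remainder J) t0
      (\<lambda>t. (\<Sum>m<N. A m t) + (\<Sum>m. G_remainder_term J t (m + N))) (\<lambda>t. (\<Sum>m<N. B m t) + 0)"
    by (rule pole_decomp_cong)
  moreover have "(\<Sum>m<N. B m t0) \<noteq> 0 \<longleftrightarrow> denominator_zero t0"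
    unfolding B_def pole_def by (rule sum_G_remainder_residues_nonzero_iff) (use N in simp)
  ultimately show ?thesis using that by simp
qed

lemma G_remainder_recurrence:
  assumes t: "Im t < 2 * real J + 3/2" "\<not> denominator_zero t"
  shows "G_remainder J t
    = t / (2 * of_real pi) * (zeta (1/2 + \<i> * t + 2 * of_nat (Suc J)) - G_remainder (Suc J) t)"
proof -
  define w where "w = 1/2 + \<i> * t + 2 * of_nat (Suc J)"
  have term_eq: "G_remainder_term J t m
      = t / (2 * of_real pi) * (of_nat (Suc m) powr (- w) - G_remainder_term (Suc J) t m)" for m
  proof -
    define n where "n = (of_nat (Suc m) :: complex)"
    define D where "D = 2 * of_real pi * n ^ 2 + t"
    define X where "X = n powr (- w)"
    have "D \<noteq> 0"
      using t(2) unfolding D_def n_def denominator_zero_def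
      by (metis add_eq_0_iff le_add1 mult_minus_left plus_1_eq_Suc)
    have "(- (1/2) - \<i> * t - 2 * of_nat J :: complex) = - w + 2"
      "(- (1/2) - \<i> * t - 2 * of_nat (Suc J) :: complex) = - w"
      by (auto simp: w_def complex_eq_iff)
    then have "G_remainder_term J t m = X * n ^ 2 * (t / D)"
      "G_remainder_term (Suc J) t m = X * (t / D)"
      unfolding G_remainder_term_def n_def[symmetric] D_def[symmetric] X_def
      by (simp_all only: powr_add powr_complexnumeral)
    moreover have "X * n ^ 2 * (t / D) = t / (2 * of_real pi) * (X - X * (t / D))"
      using \<open>D \<noteq> 0\<close> by (simp add: D_def field_simps)
    ultimately show ?thesis by (simp add: X_def n_def)
  qed
  have "(\<lambda>m. of_nat (Suc m) powr (- w)) sums zeta w"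
    by (rule zeta_sums) (use t in \<open>simp add: w_def\<close>)
  moreover have "G_remainder_term (Suc J) t sums G_remainder (Suc J) t"
    unfolding G_remainder_def by (rule summable_sums, rule summable_G_remainder_term) (use t in simp)
  ultimately have "G_remainder_term J t sums (t / (2 * of_real pi) * (zeta w - G_remainder (Suc J) t))"
    unfolding term_eq by (intro sums_mult sums_diff)
  then show ?thesis by (simp add: G_remainder_def sums_iff w_def)
qed

section \<open>Continuation of G\<close>

definition G_expansion :: "nat \<Rightarrow> complex \<Rightarrow> complex" where
  "G_expansion J t = (\<Sum>j\<in>{1..J}. (- 1) ^ (j - 1) * (t / (2 * of_real pi)) ^ j * zeta (1/2 + \<i> * t + 2 * of_nat j))
      + (- 1) ^ J * (t / (2 * of_real pi)) ^ J * G_remainder J t"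

lemma G_expansion_mono:
  assumes "Im t < 2 * real J + 3/2" "\<not> denominator_zero t" "J \<le> J'"
  shows "G_expansion J' t = G_expansion J t"
  using assms(3)
proof (induction J' rule: dec_induct)
  case (step J')
  define q where "q = t / (2 * of_real pi)"
  have rec: "G_remainder J' t = q * (zeta (1/2 + \<i> * t + 2 * of_nat (Suc J')) - G_remainder (Suc J') t)"
    unfolding q_def by (rule G_remainder_recurrence) (use assms step in auto)
  then have "G_expansion (Suc J') t = G_expansion J' t"
    unfolding G_expansion_def q_def[symmetric] rec by (simp add: sum.cl_ivl_Suc algebra_simps)
  with step show ?case by simp
qed simp

definition G_cont :: "complex \<Rightarrow> complex" where
  "G_cont t = G_expansion (nat \<lceil>Im t\<rceil>) t"

lemma G_cont_eq_expansion:
  assumes "Im t < 2 * real J + 3/2" "\<not> denominator_zero t"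
  shows "G_cont t = G_expansion J t"
proof -
  define J0 where "J0 = nat \<lceil>Im t\<rceil>"
  have J0: "Im t < 2 * real J0 + 3/2" unfolding J0_def by linarith
  have "G_cont t = G_expansion (max J J0) t"
    unfolding G_cont_def J0_def[symmetric] by (rule G_expansion_mono[symmetric]) (use J0 assms in auto)
  also have "\<dots> = G_expansion J t" by (rule G_expansion_mono) (use assms in auto)
  finally show ?thesis .
qed

lemma pole_decomp_zeta_shift:
  "\<exists>A B. pole_decomp (\<lambda>t. zeta (1/2 + \<i> * t + 2 * of_nat j)) t0 A B \<and>
     B t0 = (if t0 = 2 * of_nat j * \<i> - \<i> / 2 then - \<i> else 0)"
proof (cases "t0 = 2 * of_nat j * \<i> - \<i> / 2")
  case True
  then have "1/2 + \<i> * t + 2 * of_nat j - 1 = \<i> * (t - t0)" for t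
    by (auto simp: complex_eq_iff)
  then have "zeta (1/2 + \<i> * t + 2 * of_nat j) = 1 + zeta_reg (1/2 + \<i> * t + 2 * of_nat j) / \<i> / (t - t0)"
    for t by (simp only: zeta_def divide_divide_eq_left)
  then have "pole_decomp (\<lambda>t. zeta (1/2 + \<i> * t + 2 * of_nat j)) t0
      (\<lambda>_. 1) (\<lambda>t. zeta_reg (1/2 + \<i> * t + 2 * of_nat j) / \<i>)"
    unfolding pole_decomp_def by (auto intro!: analytic_intros)
  moreover have "1/2 + \<i> * t0 + 2 * of_nat j = 1" using True by (auto simp: complex_eq_iff)
  then have "zeta_reg (1/2 + \<i> * t0 + 2 * of_nat j) / \<i> = - \<i>" by (simp add: zeta_reg_1)
  ultimately show ?thesis
    using True by (intro exI[of _ "\<lambda>_. 1"] exI[of _ "\<lambda>t. zeta_reg (1/2 + \<i> * t + 2 * of_nat j) / \<i>"]) simp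
next
  case False
  then have "1/2 + \<i> * t0 + 2 * of_nat j - 1 \<noteq> 0" by (auto simp: complex_eq_iff)
  then have "(\<lambda>t. zeta (1/2 + \<i> * t + 2 * of_nat j)) analytic_on {t0}"
    unfolding zeta_def by (intro analytic_intros) auto
  with False show ?thesis by (auto intro: pole_decomp_analytic)
qed

lemma expansion_residue_nonzero_iff:
  fixes t0 b :: complex
  assumes J: "Im t0 \<le> real J" and b: "b \<noteq> 0 \<longleftrightarrow> denominator_zero t0"
  shows "(\<Sum>j\<in>{1..J}. (- 1) ^ (j - 1) * (t0 / (2 * of_real pi)) ^ j
            * (if t0 = 2 * of_nat j * \<i> - \<i> / 2 then - \<i> else 0))
          + (- 1) ^ J * (t0 / (2 * of_real pi)) ^ J * b \<noteq> 0
    \<longleftrightarrow> (\<exists>k::nat. k \<ge> 1 \<and> t0 = 2 * of_nat k * \<i> - \<i> / 2) \<or> denominator_zero t0"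
proof (cases "\<exists>k::nat. k \<ge> 1 \<and> t0 = 2 * of_nat k * \<i> - \<i> / 2")
  case True
  then obtain k :: nat where k: "k \<ge> 1" "t0 = 2 * of_nat k * \<i> - \<i> / 2" by blast
  then have Im: "Im t0 = 2 * real k - 1/2" by simp
  have "Im t0 \<noteq> 0" using Im k by simp
  then have "t0 \<noteq> 0" "\<not> denominator_zero t0" using denominator_zero_real_nonzero by auto
  have "k \<in> {1..J}" using Im k J by simp
  have pole_iff: "t0 = 2 * of_nat j * \<i> - \<i> / 2 \<longleftrightarrow> j = k" for j :: nat
  proof
    assume "t0 = 2 * of_nat j * \<i> - \<i> / 2"
    then show "j = k" using Im by simp
  qed (use k in simp)
  define q where "q = t0 / (2 * of_real pi)"
  have "(\<Sum>j\<in>{1..J}. (- 1) ^ (j - 1) * q ^ j * (if t0 = 2 * of_nat j * \<i> - \<i> / 2 then - \<i> else 0))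
      = (\<Sum>j\<in>{1..J}. if j = k then (- 1) ^ (k - 1) * q ^ k * - \<i> else 0)"
    by (rule sum.cong) (auto simp: pole_iff)
  also have "\<dots> = (- 1) ^ (k - 1) * q ^ k * - \<i>" using \<open>k \<in> {1..J}\<close> by simp
  finally show ?thesis
    using b True \<open>t0 \<noteq> 0\<close> \<open>\<not> denominator_zero t0\<close> by (simp add: q_def)
next
  case False
  then have "(\<Sum>j\<in>{1..J}. (- 1) ^ (j - 1) * (t0 / (2 * of_real pi)) ^ j
      * (if t0 = 2 * of_nat j * \<i> - \<i> / 2 then - \<i> else 0)) = 0"
    by (intro sum.neutral) auto
  then show ?thesis using False b denominator_zero_real_nonzero[of t0] by auto
qed

lemma pole_decomp_G_cont:
  obtains A B where "pole_decomp G_cont t0 A B"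
    "B t0 \<noteq> 0 \<longleftrightarrow> (\<exists>k::nat. k \<ge> 1 \<and> t0 = 2 * of_nat k * \<i> - \<i> / 2) \<or> denominator_zero t0"
proof -
  define J where "J = nat \<lceil>Im t0\<rceil> + 1"
  have "Im t0 \<le> real (nat \<lceil>Im t0\<rceil>)" by (rule real_nat_ceiling_ge)
  then have J: "Im t0 \<le> real J" "Im t0 < 2 * real J + 3/2" unfolding J_def by auto
  obtain AR BR where R: "pole_decomp (G_remainder J) t0 AR BR" and BR: "BR t0 \<noteq> 0 \<longleftrightarrow> denominator_zero t0"
    using pole_decomp_G_remainder[OF J(2)] by blast
  obtain ZA ZB where Z: "\<And>j. pole_decomp (\<lambda>t. zeta (1/2 + \<i> * t + 2 * of_nat j)) t0 (ZA j) (ZB j)"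
    and ZB: "\<And>j. ZB j t0 = (if t0 = 2 * of_nat j * \<i> - \<i> / 2 then - \<i> else 0)"
    using pole_decomp_zeta_shift[of _ t0] by metis
  define c where "c j t = (- 1) ^ (j - 1) * (t / (2 * of_real pi)) ^ j" for j and t :: complex
  define d where "d t = (- 1) ^ J * (t / (2 * of_real pi)) ^ J" for t :: complex
  have "pole_decomp (\<lambda>t. \<Sum>j\<in>{1..J}. c j t * zeta (1/2 + \<i> * t + 2 * of_nat j)) t0
      (\<lambda>t. \<Sum>j\<in>{1..J}. c j t * ZA j t) (\<lambda>t. \<Sum>j\<in>{1..J}. c j t * ZB j t)"
    by (intro pole_decomp_sum pole_decomp_mult Z) (auto simp: c_def intro!: analytic_intros)
  moreover have "pole_decomp (\<lambda>t. d t * G_remainder J t) t0 (\<lambda>t. d t * AR t) (\<lambda>t. d t * BR t)"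
    by (intro pole_decomp_mult R) (auto simp: d_def intro!: analytic_intros)
  ultimately have "pole_decomp (G_expansion J) t0
      (\<lambda>t. (\<Sum>j\<in>{1..J}. c j t * ZA j t) + d t * AR t) (\<lambda>t. (\<Sum>j\<in>{1..J}. c j t * ZB j t) + d t * BR t)"
    unfolding G_expansion_def[abs_def] c_def d_def by (rule pole_decomp_add)
  moreover have "\<forall>\<^sub>F t in at t0. G_cont t = G_expansion J t"
  proof -
    have "\<forall>\<^sub>F t in at t0. t \<in> {t. Im t < 2 * real J + 3/2}"
      by (rule eventually_at_in_open') (use J in \<open>auto intro: open_halfspace_Im_lt\<close>)
    then show ?thesis
      using eventually_not_denominator_zero[of t0] by eventually_elim (simp add: G_cont_eq_expansion)
  qed
  ultimately have "pole_decomp G_cont t0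
      (\<lambda>t. (\<Sum>j\<in>{1..J}. c j t * ZA j t) + d t * AR t) (\<lambda>t. (\<Sum>j\<in>{1..J}. c j t * ZB j t) + d t * BR t)"
    by (rule pole_decomp_cong)
  moreover have "(\<Sum>j\<in>{1..J}. c j t0 * ZB j t0) + d t0 * BR t0 \<noteq> 0
      \<longleftrightarrow> (\<exists>k::nat. k \<ge> 1 \<and> t0 = 2 * of_nat k * \<i> - \<i> / 2) \<or> denominator_zero t0"
    unfolding c_def d_def ZB by (rule expansion_residue_nonzero_iff[OF J(1) BR])
  ultimately show ?thesis by (rule that)
qed

theorem mainTheorem10:
  shows "\<exists>F. F meromorphic_on UNIV \<and>
     (\<forall>t. Im t < 3/2 \<and> (\<forall>n::nat. n \<ge> 1 \<longrightarrow> t \<noteq> - 2 * of_real pi * of_nat n ^ 2) \<longrightarrow> F t = G t) \<and>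
     {z. is_pole F z} =
       {2 * of_nat k * \<i> - \<i> / 2 | k::nat. k \<ge> 1} \<union> {- 2 * of_real pi * of_nat n ^ 2 | n::nat. n \<ge> 1} \<and>
     (\<forall>z. is_pole F z \<longrightarrow> zorder F z = -1)"
proof (intro exI[of _ G_cont] conjI allI impI)
  have pole_iff: "is_pole G_cont z \<longleftrightarrow>
      (\<exists>k::nat. k \<ge> 1 \<and> z = 2 * of_nat k * \<i> - \<i> / 2) \<or> denominator_zero z"
    and simple: "is_pole G_cont z \<Longrightarrow> zorder G_cont z = -1"
    and "G_cont meromorphic_on {z}" for z
  proof -
    obtain A B where decomp: "pole_decomp G_cont z A B"
      and residue: "B z \<noteq> 0 \<longleftrightarrow> (\<exists>k::nat. k \<ge> 1 \<and> z = 2 * of_nat k * \<i> - \<i> / 2) \<or> denominator_zero z"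
      by (rule pole_decomp_G_cont)
    show "is_pole G_cont z \<longleftrightarrow> (\<exists>k::nat. k \<ge> 1 \<and> z = 2 * of_nat k * \<i> - \<i> / 2) \<or> denominator_zero z"
      using pole_decomp_is_pole(1)[OF decomp] pole_decomp_not_pole[OF decomp] residue by blast
    show "is_pole G_cont z \<Longrightarrow> zorder G_cont z = -1"
      using pole_decomp_is_pole(2)[OF decomp] pole_decomp_not_pole[OF decomp] by blast
    show "G_cont meromorphic_on {z}" by (rule pole_decomp_meromorphic[OF decomp])
  qed
  then show "G_cont meromorphic_on UNIV" using meromorphic_on_meromorphic_at by blast
  show "G_cont t = G t" if "Im t < 3/2 \<and> (\<forall>n::nat. n \<ge> 1 \<longrightarrow> t \<noteq> - 2 * of_real pi * of_nat n ^ 2)" for t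
    using G_cont_eq_expansion[of t 0] that by (auto simp: denominator_zero_def G_expansion_def G_remainder_0)
  show "{z. is_pole G_cont z} =
       {2 * of_nat k * \<i> - \<i> / 2 | k::nat. k \<ge> 1} \<union> {- 2 * of_real pi * of_nat n ^ 2 | n::nat. n \<ge> 1}"
    by (auto simp: pole_iff denominator_zero_def)
  show "is_pole G_cont z \<Longrightarrow> zorder G_cont z = -1" for z by (rule simple)
qed

end
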